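(* Suppose Assumptions 1, 2 and 3 hold and problem (P) is feasible. Let $\lambda^*$ be a maximizer over $\mathbb{R}$ of the modified dual function $g^m$, so that $(\hat{x}_1(\lambda^* ),\dots,\hat{x}_N(\lambda^* ))$ is an optimal solution of (P). Consider the distributed dynamics $$\dot{\lambda}_i=d_i-\hat{x}_i(\lambda_i)+\phi_i\big(\hat{x}_i(\lambda_i)\big)+k\sum_{j\in\mathcal{N}_i}(\lambda_j-\lambda_i),\qquad i=1,\dots,N,$$ with gain $k>0$. Then for every $\epsilon>0$ there exist $\bar{k}>0$ and a function $T(\boldsymbol{\lambda}(0),k)$ such that for all $k>\bar{k}$ and every initial condition $\boldsymbol{\lambda}(0)=(\lambda_1(0),\dots,\lambda_N(0))\in\mathbb{R}^N$, $$|\hat{x}_i(\lambda_i(t))-\hat{x}_i(\lambda^* )|\le\epsilon\quad\text{for all } i\in\{1,\dots,N\}\text{ and all } t\ge T(\boldsymbol{\lambda}(0),k).$$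
   Context: For $i=1,\dots,N$: $d_i\in\mathbb{R}$, $\mathcal{X}_i=[\underline{x}_i,\bar{x}_i]$ a nonempty closed interval, $f_i,\phi_i:\mathbb{R}\to\mathbb{R}$. Problem (P): minimize $\sum_{i=1}^N f_i(x_i)$ subject to $\sum_{i=1}^N d_i=\sum_{i=1}^N(x_i-\phi_i(x_i))$ and $x_i\in\mathcal{X}_i$ for all $i$; feasibility is equivalent to $\sum_i(\underline{x}_i-\phi_i(\underline{x}_i))\le\sum_i d_i\le\sum_i(\bar{x}_i-\phi_i(\bar{x}_i))$. Assumption 1: for each $i$, $f_i$ and $\phi_i$ are continuously differentiable, $f_i$ is strictly convex on $\mathcal{X}_i$, $\phi_i$ is convex on $\mathcal{X}_i$, and $\phi_i'(x_i)<1$ for all $x_i\in\mathcal{X}_i$. Assumption 2: $f_i'(x_i)>0$ for all $x_i\in\mathcal{X}_i$ and all $i$. Assumption 3: the communication graph $\mathcal{G}=(\{1,\dots,N\},\mathcal{E})$ is undirected and connected; $\mathcal{N}_i=\{j:(j,i)\in\mathcal{E}\}$. Local Lagrangian: $\mathcal{L}^r_i(x_i,\lambda)=f_i(x_i)+\lambda(d_i-x_i+\phi_i(x_i))$. Let $v_i(x_i)=f_i'(x_i)(1-\phi_i'(x_i))^{-1}$ on $\mathcal{X}_i$ (strictly increasing). Define for $\lambda\in\mathbb{R}$: $\hat{x}_i(\lambda)=\underline{x}_i$ if $\lambda\le v_i(\underline{x}_i)$; $\hat{x}_i(\lambda)=v_i^{-1}(\lambda)$ if $v_i(\underline{x}_i)<\lambda<v_i(\bar{x}_i)$;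 $\hat{x}_i(\lambda)=\bar{x}_i$ if $\lambda\ge v_i(\bar{x}_i)$. Modified dual function: $g^m(\lambda)=\sum_{i=1}^N\mathcal{L}^r_i(\hat{x}_i(\lambda),\lambda)$. *)

theory Defs
  imports "HOL-Analysis.Analysis"
begin

definition strictly_convex_on :: "real set \<Rightarrow> (real \<Rightarrow> real) \<Rightarrow> bool" where
  "strictly_convex_on S g \<longleftrightarrow>
     (\<forall>x\<in>S. \<forall>y\<in>S. x \<noteq> y \<longrightarrow> (\<forall>u::real. 0 < u \<and> u < 1 \<longrightarrow>
        g (u * x + (1 - u) * y) < u * g x + (1 - u) * g y))"

definition vfun :: "(real \<Rightarrow> real) \<Rightarrow> (real \<Rightarrow> real) \<Rightarrow> real \<Rightarrow> real" where
  "vfun f phi x = deriv f x / (1 - deriv phi x)"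

definition xhat :: "(real \<Rightarrow> real) \<Rightarrow> (real \<Rightarrow> real) \<Rightarrow> real \<Rightarrow> real \<Rightarrow> real \<Rightarrow> real" where
  "xhat f phi xl xu lam =
     (if lam \<le> vfun f phi xl then xl
      else if lam \<ge> vfun f phi xu then xu
      else (THE x. x \<in> {xl..xu} \<and> vfun f phi x = lam))"

definition lagr_loc :: "(real \<Rightarrow> real) \<Rightarrow> (real \<Rightarrow> real) \<Rightarrow> real \<Rightarrow> real \<Rightarrow> real \<Rightarrow> real" where
  "lagr_loc f phi d x lam = f x + lam * (d - x + phi x)"

definition gm :: "nat \<Rightarrow> (nat \<Rightarrow> real \<Rightarrow> real) \<Rightarrow> (nat \<Rightarrow> real \<Rightarrow> real) \<Rightarrow> (nat \<Rightarrow> real)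
     \<Rightarrow> (nat \<Rightarrow> real) \<Rightarrow> (nat \<Rightarrow> real) \<Rightarrow> real \<Rightarrow> real" where
  "gm N f phi d xl xu lam =
     (\<Sum>i<N. lagr_loc (f i) (phi i) (d i) (xhat (f i) (phi i) (xl i) (xu i) lam) lam)"

end

theory Submission
  imports Defs
begin

text \<open>
  The local term of the dynamics is the mismatch \<open>h\<^sub>i(\<lambda>) = d\<^sub>i - x\<^sub>i(\<lambda>) + \<phi>\<^sub>i(x\<^sub>i(\<lambda>))\<close>,
  where \<open>x\<^sub>i = xhat\<close>. It is bounded, continuous and nonincreasing, and since \<open>x - \<phi>\<^sub>i(x)\<close> grows
  at a positive rate on \<open>\<X>\<^sub>i\<close>, a small change of \<open>h\<^sub>i\<close> forces a small change of \<open>x\<^sub>i\<close>. The mismatch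
  is a supergradient of \<open>g\<^sup>m\<close>, so the aggregate \<open>H = \<Sum>\<^sub>i h\<^sub>i\<close> vanishes at the maximiser \<open>\<lambda>\<^sup>*\<close>;
  as all \<open>h\<^sub>i\<close> move in the same direction, \<open>|H(\<lambda>)| \<le> c \<epsilon>\<close> gives \<open>|x\<^sub>i(\<lambda>) - x\<^sub>i(\<lambda>\<^sup>*)| \<le> \<epsilon>\<close>.

  Along the dynamics the disagreement \<open>\<Sum>\<^sub>i\<^sub>,\<^sub>j (\<lambda>\<^sub>i - \<lambda>\<^sub>j)\<^sup>2\<close> decreases at unit rate while it
  exceeds \<open>\<rho>\<^sup>2\<close>, provided \<open>k\<close> is large: the Laplacian dissipates \<open>k\<close> times the edge energy,
  which on a connected graph dominates the disagreement, and the local terms are bounded.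
  Afterwards all \<open>\<lambda>\<^sub>i\<close> are \<open>\<rho>\<close>-close, the Laplacian does not change \<open>\<Sum>\<^sub>i \<lambda>\<^sub>i\<close>, and this sum moves
  like \<open>N H\<close> at the common value. Hence it is driven into, and kept in, the region where
  \<open>|H| \<le> c \<epsilon>\<close>, whose margin around the level sets \<open>H = \<plusminus>c \<epsilon>/2\<close> determines \<open>\<rho>\<close>.
\<close>

section \<open>Real analysis on intervals\<close>

text \<open>Unlike \<open>convex_on_imp_above_tangent\<close>, the point \<open>c\<close> may be an endpoint of the interval.\<close>
lemma convex_on_Icc_above_tangent:
  fixes f :: "real \<Rightarrow> real"
  assumes conv: "convex_on {a..b} f" and c: "c \<in> {a..b}" and x: "x \<in> {a..b}"
    and der: "(f has_real_derivative f') (at c within {a..b})"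
  shows "f' * (x - c) \<le> f x - f c"
proof (cases x c rule: linorder_cases)
  assume xc: "c < x"
  have cv: "convex_on {c..x} f" using c x by (intro convex_on_subset[OF conv]) auto
  have "at c within {c<..<x} \<noteq> bot" using xc by (simp add: at_within_eq_bot_iff)
  moreover have "{c<..<x} \<subseteq> {a..b}" using c x by auto
  hence "((\<lambda>y. (f y - f c) / (y - c)) \<longlongrightarrow> f') (at c within {c<..<x})"
    using der unfolding has_field_derivative_iff by (rule tendsto_mono[OF at_le])
  moreover have "\<forall>\<^sub>F y in at c within {c<..<x}. (f y - f c) / (y - c) \<le> (f x - f c) / (x - c)"
    unfolding eventually_at_filter
  proof (intro always_eventually allI impI)
    fix y assume y: "y \<in> {c<..<x}"
    with cv have "f y \<le> (f x - f c) / (x - c) * (y - c) + f c"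
      by (intro convex_onD_Icc') auto
    thus "(f y - f c) / (y - c) \<le> (f x - f c) / (x - c)" using y by (simp add: field_split_simps)
  qed
  ultimately have "f' \<le> (f x - f c) / (x - c)" by (simp add: tendsto_upperbound)
  thus ?thesis using xc by (simp add: field_simps)
next
  assume xc: "x < c"
  have cv: "convex_on {x..c} f" using c x by (intro convex_on_subset[OF conv]) auto
  have "at c within {x<..<c} \<noteq> bot" using xc by (simp add: at_within_eq_bot_iff)
  moreover have "{x<..<c} \<subseteq> {a..b}" using c x by auto
  hence "((\<lambda>y. (f y - f c) / (y - c)) \<longlongrightarrow> f') (at c within {x<..<c})"
    using der unfolding has_field_derivative_iff by (rule tendsto_mono[OF at_le])
  moreover have "\<forall>\<^sub>F y in at c within {x<..<c}. (f x - f c) / (x - c) \<le> (f y - f c) / (y - c)"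
    unfolding eventually_at_filter
  proof (intro always_eventually allI impI)
    fix y assume y: "y \<in> {x<..<c}"
    with cv have "f y \<le> (f x - f c) / (c - x) * (c - y) + f c"
      by (intro convex_onD_Icc'') auto
    thus "(f x - f c) / (x - c) \<le> (f y - f c) / (y - c)" using y xc
      by (simp add: field_split_simps)
  qed
  ultimately have "(f x - f c) / (x - c) \<le> f'" by (simp add: tendsto_lowerbound)
  thus ?thesis using xc by (simp add: field_simps)
qed simp

lemma strictly_convex_on_imp_convex_on:
  assumes "convex S" and sc: "strictly_convex_on S f"
  shows "convex_on S f"
proof (rule convex_onI)
  fix t :: real and x y assume t: "0 < t" "t < 1" and xy: "x \<in> S" "y \<in> S"
  show "f ((1 - t) *\<^sub>R x + t *\<^sub>R y) \<le> (1 - t) * f x + t * f y"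
  proof (cases "x = y")
    case False
    have "f (t * y + (1 - t) * x) < t * f y + (1 - t) * f x"
      using sc[unfolded strictly_convex_on_def, rule_format, OF xy(2,1)] False t by auto
    thus ?thesis by (simp add: algebra_simps)
  qed (simp add: algebra_simps)
qed (fact assms(1))

lemma strictly_convex_on_Icc_above_tangent:
  fixes f :: "real \<Rightarrow> real"
  assumes sc: "strictly_convex_on {a..b} f" and c: "c \<in> {a..b}" and x: "x \<in> {a..b}"
    and "x \<noteq> c" and der: "(f has_real_derivative f') (at c within {a..b})"
  shows "f' * (x - c) < f x - f c"
proof -
  define m where "m = (1/2) * x + (1 - 1/2) * c"
  have "m \<in> {a..b}" using c x unfolding m_def by auto
  have "f m < (1/2) * f x + (1 - 1/2) * f c"
    using sc[unfolded strictly_convex_on_def, rule_format, OF x c \<open>x \<noteq> c\<close>, of "1/2"]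
    unfolding m_def by simp
  moreover have "f' * (m - c) \<le> f m - f c"
    using convex_on_Icc_above_tangent[OF strictly_convex_on_imp_convex_on[OF _ sc] c \<open>m \<in> {a..b}\<close> der]
    by simp
  ultimately show ?thesis unfolding m_def by (simp add: algebra_simps)
qed

lemma pos_deriv_Icc_imp_expanding:
  fixes g g' :: "real \<Rightarrow> real"
  assumes "a \<le> b" and der: "\<And>x. x \<in> {a..b} \<Longrightarrow> (g has_real_derivative g' x) (at x)"
    and "continuous_on {a..b} g'" and pos: "\<And>x. x \<in> {a..b} \<Longrightarrow> 0 < g' x"
  obtains c where "0 < c" "\<And>x y. x \<in> {a..b} \<Longrightarrow> y \<in> {a..b} \<Longrightarrow> x \<le> y \<Longrightarrow> c * (y - x) \<le> g y - g x"
proof -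
  obtain m where m: "m \<in> {a..b}" "\<And>y. y \<in> {a..b} \<Longrightarrow> g' m \<le> g' y"
    using continuous_attains_inf[OF compact_Icc _ assms(3)] \<open>a \<le> b\<close> by auto
  have "g' m * (y - x) \<le> g y - g x" if "x \<in> {a..b}" "y \<in> {a..b}" "x \<le> y" for x y
  proof -
    have "g x - g' m * x \<le> g y - g' m * y"
    proof (rule DERIV_nonneg_imp_nondecreasing[OF \<open>x \<le> y\<close>])
      fix z assume "x \<le> z" "z \<le> y"
      hence "z \<in> {a..b}" using that by auto
      thus "\<exists>l. ((\<lambda>z. g z - g' m * z) has_real_derivative l) (at z) \<and> 0 \<le> l"
        using der[of z] m(2)[of z] by (intro exI[of _ "g' z - g' m"]) (auto intro!: derivative_eq_intros)
    qed
    thus ?thesis by (simp add: algebra_simps)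
  qed
  with that[of "g' m"] pos[OF m(1)] show ?thesis by blast
qed

lemma last_time_le_level:
  fixes g :: "real \<Rightarrow> real"
  assumes cont: "continuous_on {s0..t1} g" and "s0 \<le> t1"
  obtains s where "s \<in> {s0..t1}" "s = s0 \<or> g s \<le> c" "\<And>y. s < y \<Longrightarrow> y \<le> t1 \<Longrightarrow> c < g y"
proof -
  let ?S = "{s \<in> {s0..t1}. g s \<le> c}"
  show ?thesis
  proof (cases "?S = {}")
    case True
    show ?thesis
    proof (rule that[of s0])
      fix y assume "s0 < y" "y \<le> t1"
      moreover have "y \<notin> ?S" using True by blast
      ultimately show "c < g y" by auto
    qed (use \<open>s0 \<le> t1\<close> in auto)
  next
    case False
    have "closed ?S" using continuous_on_closed_Collect_le[OF cont continuous_on_const] by simp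
    moreover have bdd: "bdd_above ?S" by (rule bdd_aboveI[of _ t1]) auto
    ultimately have Sup: "Sup ?S \<in> ?S" by (intro closed_contains_Sup False)
    show ?thesis
    proof (rule that[of "Sup ?S"])
      fix y assume y: "Sup ?S < y" "y \<le> t1"
      show "c < g y"
      proof (rule ccontr)
        assume "\<not> c < g y"
        hence "y \<in> ?S" using y Sup by auto
        hence "y \<le> Sup ?S" by (rule cSup_upper[OF _ bdd])
        thus False using y by simp
      qed
    qed (use Sup in auto)
  qed
qed

lemma descent_above_level:
  fixes g g' :: "real \<Rightarrow> real"
  assumes der: "\<And>t. s0 \<le> t \<Longrightarrow> (g has_real_derivative g' t) (at t within {s0..})"
    and descent: "\<And>t. s0 \<le> t \<Longrightarrow> c < g t \<Longrightarrow> g' t \<le> - gam"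
    and "0 \<le> gam" and "s0 \<le> t1"
  shows "g t1 \<le> max c (g s0 - gam * (t1 - s0))"
proof -
  have cont: "continuous_on {s0..} g" by (rule DERIV_continuous_on) (use der in auto)
  obtain s where s: "s \<in> {s0..t1}" "s = s0 \<or> g s \<le> c" "\<And>y. s < y \<Longrightarrow> y \<le> t1 \<Longrightarrow> c < g y"
    using last_time_le_level[OF continuous_on_subset[OF cont] \<open>s0 \<le> t1\<close>] by auto
  have "g t1 + gam * t1 \<le> g s + gam * s"
  proof (rule DERIV_nonpos_imp_decreasing_open[where f = "\<lambda>x. g x + gam * x"])
    fix y assume y: "s < y" "y < t1"
    have "interior {s0..} = {s0<..}" by (rule interior_Ici[of "s0 - 1"]) simp
    hence "at y within {s0..} = at y" using s(1) y by (intro at_within_interior) auto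
    moreover have "(g has_real_derivative g' y) (at y within {s0..})" using s(1) y by (intro der) auto
    ultimately have "((\<lambda>x. g x + gam * x) has_real_derivative g' y + gam) (at y)"
      by (auto intro!: derivative_eq_intros)
    moreover have "g' y \<le> - gam" using s y by (intro descent) auto
    ultimately show "\<exists>l. ((\<lambda>x. g x + gam * x) has_real_derivative l) (at y) \<and> l \<le> 0"
      by (intro exI[of _ "g' y + gam"]) simp
  next
    have "continuous_on {s..t1} g" using s(1) by (intro continuous_on_subset[OF cont]) auto
    thus "continuous_on {s..t1} (\<lambda>x. g x + gam * x)" by (intro continuous_intros)
  qed (use s(1) in simp)
  moreover have "0 \<le> gam * (t1 - s)" using s(1) \<open>0 \<le> gam\<close> by simp
  ultimately show ?thesis using s(2) by (elim disjE) (simp_all add: algebra_simps)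
qed

text \<open>\<open>U + r\<close> is a target for the dual variables: below it \<open>H \<ge> -eta\<close>, and above \<open>U\<close> the value
  \<open>H \<le> -eta/2\<close> pushes them down, unless \<open>H \<ge> -eta\<close> holds everywhere anyway.\<close>
lemma antimono_continuous_margin:
  fixes H :: "real \<Rightarrow> real"
  assumes "antimono H" "continuous_on UNIV H" "H x0 = 0" "0 < eta"
  obtains U r where "0 < r" "\<And>mu. mu \<le> U + r \<Longrightarrow> - eta \<le> H mu"
    "H U \<le> - (eta / 2) \<or> (\<forall>mu. - eta \<le> H mu)"
proof (cases "\<forall>mu. - eta \<le> H mu")
  case True
  thus ?thesis using that[of 1 x0] by simp
next
  case False
  then obtain mu2 where mu2: "H mu2 < - eta" by (auto simp: not_le)
  have "x0 \<le> mu2" using mu2 assms(3,4) antimonoD[OF assms(1), of mu2 x0] by fastforce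
  then obtain U where U: "x0 \<le> U" "U \<le> mu2" "H U = - (eta / 2)"
    using IVT2'[of H mu2 "- (eta / 2)" x0] mu2 assms(2-4) continuous_on_subset by fastforce
  have "isCont H U" using assms(2) by (simp add: continuous_on_eq_continuous_at)
  then obtain r where "0 < r" and r: "\<And>mu. \<bar>mu - U\<bar> < r \<Longrightarrow> \<bar>H mu - H U\<bar> < eta / 2"
    using \<open>0 < eta\<close> unfolding continuous_at_eps_delta dist_real_def by (metis half_gt_zero)
  have "- eta \<le> H mu" if "mu \<le> U + r / 2" for mu
  proof (cases "mu \<le> U")
    case True thus ?thesis using antimonoD[OF assms(1) True] U(3) assms(4) by simp
  next
    case False
    hence "\<bar>H mu - H U\<bar> < eta / 2" using that \<open>0 < r\<close> by (intro r) simp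
    thus ?thesis using U(3) by linarith
  qed
  thus ?thesis using that[of "r / 2" U] \<open>0 < r\<close> U(3) by simp
qed

lemma abs_mult_diff_le_amgm:
  fixes w p q B th :: real
  assumes "\<bar>p\<bar> \<le> B" "\<bar>q\<bar> \<le> B" "0 < th"
  shows "2 * w * (p - q) \<le> th * w\<^sup>2 + 4 * B\<^sup>2 / th"
proof -
  have "2 * w * (p - q) \<le> 2 * \<bar>w\<bar> * \<bar>p - q\<bar>" by (simp add: abs_mult[symmetric])
  also have "\<dots> \<le> 2 * \<bar>w\<bar> * (2 * B)" using assms by (intro mult_left_mono) auto
  also have "\<dots> \<le> th * w\<^sup>2 + 4 * B\<^sup>2 / th"
  proof -
    have "0 \<le> (th * \<bar>w\<bar> - 2 * B)\<^sup>2" by simp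
    hence "4 * B * \<bar>w\<bar> \<le> (th\<^sup>2 * w\<^sup>2 + 4 * B\<^sup>2) / th"
      using assms(3) by (simp add: power2_eq_square algebra_simps field_simps)
    also have "\<dots> = th * w\<^sup>2 + 4 * B\<^sup>2 / th" using assms(3) by (simp add: field_simps power2_eq_square)
    finally show ?thesis by (simp add: mult_ac)
  qed
  finally show ?thesis .
qed

lemma continuous_sign_change_imp_eq_0:
  fixes H :: "real \<Rightarrow> real"
  assumes "isCont H x" "\<And>y. x < y \<Longrightarrow> H y \<le> 0" "\<And>y. y < x \<Longrightarrow> 0 \<le> H y"
  shows "H x = 0"
proof -
  have "(H \<longlongrightarrow> H x) (at_right x)" "(H \<longlongrightarrow> H x) (at_left x)"
    using assms(1) by (auto simp: isCont_def intro: tendsto_mono at_le)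
  moreover have "\<forall>\<^sub>F y in at_right x. H y \<le> 0"
    using eventually_at_right_less by (rule eventually_mono) (rule assms(2))
  moreover have "\<forall>\<^sub>F y in at_left x. y \<in> {x - 1<..<x}" by (rule eventually_at_left_real) simp
  hence "\<forall>\<^sub>F y in at_left x. 0 \<le> H y" by (rule eventually_mono) (simp add: assms(3))
  ultimately have "H x \<le> 0" "0 \<le> H x"
    by (auto intro: tendsto_upperbound tendsto_lowerbound)
  thus ?thesis by simp
qed

section \<open>A single agent\<close>

definition mismatch :: "(real \<Rightarrow> real) \<Rightarrow> (real \<Rightarrow> real) \<Rightarrow> real \<Rightarrow> real \<Rightarrow> real \<Rightarrow> real \<Rightarrow> real"
  where "mismatch f p a b d lam = d - xhat f p a b lam + p (xhat f p a b lam)"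

locale agent =
  fixes f p :: "real \<Rightarrow> real" and a b :: real
  assumes le: "a \<le> b"
    and f_C1: "f C1_differentiable_on UNIV" and p_C1: "p C1_differentiable_on UNIV"
    and f_strictly_convex: "strictly_convex_on {a..b} f"
    and p_convex: "convex_on {a..b} p"
    and deriv_p_less_1: "\<forall>x\<in>{a..b}. deriv p x < 1"
    and deriv_f_pos: "\<forall>x\<in>{a..b}. 0 < deriv f x"
begin

abbreviation v where "v \<equiv> vfun f p"
abbreviation xh where "xh \<equiv> xhat f p a b"

lemma has_real_derivative_f: "(f has_real_derivative deriv f x) (at x within S)"
  using f_C1 unfolding C1_differentiable_on_eq
  by (simp add: DERIV_deriv_iff_real_differentiable has_field_derivative_at_within)

lemma has_real_derivative_p: "(p has_real_derivative deriv p x) (at x within S)"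
  using p_C1 unfolding C1_differentiable_on_eq
  by (simp add: DERIV_deriv_iff_real_differentiable has_field_derivative_at_within)

lemma continuous_on_deriv_p: "continuous_on S (deriv p)"
proof -
  have "(\<lambda>x. vector_derivative p (at x)) = deriv p"
    by (rule ext) (simp add: field_derivative_eq_vector_derivative)
  thus ?thesis using p_C1 unfolding C1_differentiable_on_eq by (metis continuous_on_subset subset_UNIV)
qed

lemma continuous_on_deriv_f: "continuous_on S (deriv f)"
proof -
  have "(\<lambda>x. vector_derivative f (at x)) = deriv f"
    by (rule ext) (simp add: field_derivative_eq_vector_derivative)
  thus ?thesis using f_C1 unfolding C1_differentiable_on_eq by (metis continuous_on_subset subset_UNIV)
qed

lemma continuous_on_p: "continuous_on S p"
  using has_real_derivative_p by (meson DERIV_isCont continuous_at_imp_continuous_on)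

lemma strict_mono_on_deriv_f: "strict_mono_on {a..b} (deriv f)"
proof (rule strict_mono_onI)
  fix x y assume xy: "x \<in> {a..b}" "y \<in> {a..b}" "x < y"
  have "deriv f x * (y - x) < f y - f x"
    using strictly_convex_on_Icc_above_tangent[OF f_strictly_convex xy(1,2) _ has_real_derivative_f] xy(3)
    by simp
  moreover have "deriv f y * (x - y) < f x - f y"
    using strictly_convex_on_Icc_above_tangent[OF f_strictly_convex xy(2,1) _ has_real_derivative_f] xy(3)
    by simp
  ultimately have "0 < (deriv f y - deriv f x) * (y - x)" by (simp add: algebra_simps)
  thus "deriv f x < deriv f y" using xy(3) by (simp add: zero_less_mult_iff)
qed

lemma mono_on_deriv_p: "mono_on {a..b} (deriv p)"
proof (rule mono_onI)
  fix x y assume xy: "x \<in> {a..b}" "y \<in> {a..b}" "x \<le> y"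
  have "deriv p x * (y - x) \<le> p y - p x"
    by (rule convex_on_Icc_above_tangent[OF p_convex xy(1,2) has_real_derivative_p])
  moreover have "deriv p y * (x - y) \<le> p x - p y"
    by (rule convex_on_Icc_above_tangent[OF p_convex xy(2,1) has_real_derivative_p])
  ultimately have "0 \<le> (deriv p y - deriv p x) * (y - x)" by (simp add: algebra_simps)
  thus "deriv p x \<le> deriv p y" using xy(3) by (cases "x = y") (auto simp: zero_le_mult_iff)
qed

lemma strict_mono_on_v: "strict_mono_on {a..b} v"
proof (rule strict_mono_onI)
  fix x y assume xy: "x \<in> {a..b}" "y \<in> {a..b}" "x < y"
  have "deriv f x < deriv f y" using strict_mono_onD[OF strict_mono_on_deriv_f xy] .
  moreover have "deriv p x \<le> deriv p y" using mono_onD[OF mono_on_deriv_p xy(1,2)] xy(3) by simp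
  moreover have "0 < deriv f x" "deriv p x < 1" "deriv p y < 1"
    using deriv_f_pos deriv_p_less_1 xy by auto
  ultimately have "deriv f x / (1 - deriv p x) \<le> deriv f x / (1 - deriv p y)"
    and "deriv f x / (1 - deriv p y) < deriv f y / (1 - deriv p y)"
    by (auto intro: divide_left_mono divide_strict_right_mono)
  thus "v x < v y" unfolding vfun_def by linarith
qed

lemma continuous_on_v: "continuous_on {a..b} v"
  unfolding vfun_def
  by (intro continuous_on_divide continuous_on_diff continuous_on_const continuous_on_deriv_f
      continuous_on_deriv_p) (use deriv_p_less_1 in force)

lemma xhat_interior:
  assumes "v a < lam" "lam < v b"
  shows "xh lam \<in> {a..b}" "v (xh lam) = lam"
proof -
  obtain x where x: "x \<in> {a..b}" "v x = lam"
    using IVT'[of v a lam b] assms le continuous_on_v by force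
  moreover have "y = x" if "y \<in> {a..b}" "v y = lam" for y
    using strict_mono_onD[OF strict_mono_on_v, of x y] strict_mono_onD[OF strict_mono_on_v, of y x] x that
    by (cases x y rule: linorder_cases) auto
  ultimately have "\<exists>!x. x \<in> {a..b} \<and> v x = lam" by blast
  moreover have "xh lam = (THE x. x \<in> {a..b} \<and> v x = lam)"
    unfolding xhat_def using assms by auto
  ultimately show "xh lam \<in> {a..b}" "v (xh lam) = lam" using theI'[of "\<lambda>x. x \<in> {a..b} \<and> v x = lam"]
    by simp_all
qed

lemma xhat_mem: "xh lam \<in> {a..b}"
  using xhat_interior[of lam] le unfolding xhat_def by (auto simp: not_le)

lemma v_xhat_le: assumes "a < xh lam" shows "v (xh lam) \<le> lam"
proof (cases "lam \<le> v a")
  case True thus ?thesis using assms unfolding xhat_def by simp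
next
  case False
  thus ?thesis using xhat_interior(2)[of lam] unfolding xhat_def by (cases "v b \<le> lam") auto
qed

lemma le_v_xhat: assumes "xh lam < b" shows "lam \<le> v (xh lam)"
proof (cases "lam \<le> v a")
  case True thus ?thesis unfolding xhat_def by simp
next
  case False
  thus ?thesis using assms xhat_interior(2)[of lam] unfolding xhat_def by (cases "v b \<le> lam") auto
qed

lemma mono_xhat: "mono xh"
proof (rule monoI, rule ccontr)
  fix lam mu :: real assume "lam \<le> mu" "\<not> xh lam \<le> xh mu"
  hence lt: "xh mu < xh lam" by simp
  with xhat_mem[of mu] xhat_mem[of lam] have "mu \<le> v (xh mu)" "v (xh lam) \<le> lam"
    by (auto intro: le_v_xhat v_xhat_le)
  moreover have "v (xh mu) < v (xh lam)"
    by (rule strict_mono_onD[OF strict_mono_on_v xhat_mem xhat_mem lt])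
  ultimately show False using \<open>lam \<le> mu\<close> by simp
qed

lemma xhat_v: assumes "x \<in> {a..b}" shows "xh (v x) = x"
proof -
  consider "x = a" | "x = b" "a < b" | "a < x" "x < b" using assms by force
  thus ?thesis
  proof cases
    case 1 thus ?thesis unfolding xhat_def by simp
  next
    case 2
    have "v a < v b" using strict_mono_onD[OF strict_mono_on_v, of a b] 2 by auto
    thus ?thesis using 2 unfolding xhat_def by simp
  next
    case 3
    have "v a < v x" "v x < v b"
      using strict_mono_onD[OF strict_mono_on_v, of a x] strict_mono_onD[OF strict_mono_on_v, of x b] 3
      by auto
    from xhat_interior[OF this] show ?thesis
      using inj_onD[OF strict_mono_on_imp_inj_on[OF strict_mono_on_v]] assms by blast
  qed
qed

lemma xhat_clamp: "xh lam = xh (max (v a) (min (v b) lam))"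
proof -
  have "xh (v a) = a" "xh (v b) = b" using xhat_v le by auto
  moreover have "xh lam = a" if "lam \<le> v a" using that unfolding xhat_def by simp
  moreover have "xh lam = b" if "v b \<le> lam" "\<not> lam \<le> v a" using that unfolding xhat_def by simp
  moreover have "v a < v b \<or> a = b" using strict_mono_onD[OF strict_mono_on_v, of a b] le by force
  ultimately show ?thesis by (cases "lam \<le> v a"; cases "v b \<le> lam") (auto simp: max_def min_def)
qed

text \<open>\<open>xh\<close> inverts \<open>v\<close> on \<open>{v a..v b}\<close> and is constant outside.\<close>
lemma continuous_on_xhat: "continuous_on S xh"
proof -
  have "continuous_on (v ` {a..b}) xh"
    by (rule continuous_on_inv[OF continuous_on_v compact_Icc]) (simp add: xhat_v)
  moreover have "{v a..v b} \<subseteq> v ` {a..b}"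
  proof
    fix y assume "y \<in> {v a..v b}"
    then obtain x where "a \<le> x" "x \<le> b" "v x = y" using IVT'[of v a y b] le continuous_on_v by auto
    thus "y \<in> v ` {a..b}" by auto
  qed
  ultimately have "continuous_on {v a..v b} xh" by (rule continuous_on_subset)
  moreover have "v a \<le> v b" using strict_mono_onD[OF strict_mono_on_v, of a b] le by (cases "a = b") auto
  ultimately have "continuous_on S (xh \<circ> (\<lambda>lam. max (v a) (min (v b) lam)))"
    by (intro continuous_on_compose[OF _ continuous_on_subset]) (auto intro!: continuous_intros)
  moreover have "xh \<circ> (\<lambda>lam. max (v a) (min (v b) lam)) = xh"
    by (rule ext) (simp add: xhat_clamp[symmetric])
  ultimately show ?thesis by simp
qed

lemma has_real_derivative_lagr_loc:
  assumes "y \<in> {a..b}"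
  shows "((\<lambda>x. lagr_loc f p d x lam) has_real_derivative (1 - deriv p y) * (v y - lam)) (at y)"
proof -
  have "1 - deriv p y \<noteq> 0" using deriv_p_less_1 assms by force
  hence "deriv f y + (deriv p y - 1) * lam = (1 - deriv p y) * (v y - lam)"
    unfolding vfun_def by (simp add: field_simps)
  with has_real_derivative_f has_real_derivative_p show ?thesis
    unfolding lagr_loc_def by (auto intro!: derivative_eq_intros)
qed

text \<open>The sign of the derivative of the local Lagrangian is the sign of \<open>v y - lam\<close>, which
  changes at \<open>xh lam\<close>.\<close>
lemma lagr_loc_xhat_le:
  assumes x: "x \<in> {a..b}"
  shows "lagr_loc f p d (xh lam) lam \<le> lagr_loc f p d x lam"
proof (cases x "xh lam" rule: linorder_cases)
  case less
  have "v y \<le> v (xh lam)" if "y \<in> {x..xh lam}" for y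
    using mono_onD[OF strict_mono_on_imp_mono_on[OF strict_mono_on_v]] that x xhat_mem[of lam] by auto
  moreover have "v (xh lam) \<le> lam" using less x by (intro v_xhat_le) auto
  moreover have "0 < 1 - deriv p y" if "y \<in> {x..xh lam}" for y
    using deriv_p_less_1 that x xhat_mem[of lam] by force
  ultimately have "\<exists>l. ((\<lambda>x. lagr_loc f p d x lam) has_real_derivative l) (at y) \<and> l \<le> 0"
    if "x \<le> y" "y \<le> xh lam" for y
    using that x xhat_mem[of lam] has_real_derivative_lagr_loc[of y]
    by (intro exI[of _ "(1 - deriv p y) * (v y - lam)"] conjI mult_nonneg_nonpos) force+
  thus ?thesis using DERIV_nonpos_imp_nonincreasing[of x "xh lam"] less by auto
next
  case greater
  have "v (xh lam) \<le> v y" if "y \<in> {xh lam..x}" for y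
    using mono_onD[OF strict_mono_on_imp_mono_on[OF strict_mono_on_v]] that x xhat_mem[of lam] by auto
  moreover have "lam \<le> v (xh lam)" using greater x by (intro le_v_xhat) auto
  moreover have "0 < 1 - deriv p y" if "y \<in> {xh lam..x}" for y
    using deriv_p_less_1 that x xhat_mem[of lam] by force
  ultimately have "\<exists>l. ((\<lambda>x. lagr_loc f p d x lam) has_real_derivative l) (at y) \<and> 0 \<le> l"
    if "xh lam \<le> y" "y \<le> x" for y
    using that x xhat_mem[of lam] has_real_derivative_lagr_loc[of y]
    by (intro exI[of _ "(1 - deriv p y) * (v y - lam)"] conjI mult_nonneg_nonneg) force+
  thus ?thesis using DERIV_nonneg_imp_nondecreasing[of "xh lam" x] greater by auto
qed simp

lemma lagr_loc_xhat_supergradient: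
  "lagr_loc f p d (xh mu) mu \<le> lagr_loc f p d (xh lam) lam + (mu - lam) * mismatch f p a b d lam"
proof -
  have "lagr_loc f p d (xh mu) mu \<le> lagr_loc f p d (xh lam) mu"
    by (rule lagr_loc_xhat_le[OF xhat_mem])
  also have "\<dots> = lagr_loc f p d (xh lam) lam + (mu - lam) * mismatch f p a b d lam"
    unfolding lagr_loc_def mismatch_def by (simp add: algebra_simps)
  finally show ?thesis .
qed

lemma mismatch_expanding:
  obtains c where "0 < c"
    "\<And>lam mu. lam \<le> mu \<Longrightarrow> c * (xh mu - xh lam) \<le> mismatch f p a b d lam - mismatch f p a b d mu"
proof -
  have "((\<lambda>x. x - p x) has_real_derivative 1 - deriv p x) (at x)" for x
    by (auto intro!: derivative_eq_intros has_real_derivative_p)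
  moreover have "continuous_on {a..b} (\<lambda>x. 1 - deriv p x)"
    by (intro continuous_intros continuous_on_deriv_p)
  moreover have "\<And>x. x \<in> {a..b} \<Longrightarrow> 0 < 1 - deriv p x" using deriv_p_less_1 by force
  ultimately obtain c where "0 < c" and c: "\<And>x y. x \<in> {a..b} \<Longrightarrow> y \<in> {a..b} \<Longrightarrow> x \<le> y \<Longrightarrow>
      c * (y - x) \<le> (y - p y) - (x - p x)"
    by (rule pos_deriv_Icc_imp_expanding[OF le]) auto
  show ?thesis
  proof (rule that[OF \<open>0 < c\<close>])
    fix lam mu :: real assume "lam \<le> mu"
    thus "c * (xh mu - xh lam) \<le> mismatch f p a b d lam - mismatch f p a b d mu"
      using c[OF xhat_mem xhat_mem monoD[OF mono_xhat \<open>lam \<le> mu\<close>]] unfolding mismatch_def by simp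
  qed
qed

lemma antimono_mismatch: "antimono (mismatch f p a b d)"
proof (rule antimonoI)
  fix lam mu :: real assume "lam \<le> mu"
  obtain c where "0 < c"
    "c * (xh mu - xh lam) \<le> mismatch f p a b d lam - mismatch f p a b d mu"
    by (rule mismatch_expanding[of d]) (use \<open>lam \<le> mu\<close> in blast)
  moreover have "xh lam \<le> xh mu" using monoD[OF mono_xhat \<open>lam \<le> mu\<close>] .
  ultimately show "mismatch f p a b d mu \<le> mismatch f p a b d lam"
    by (smt (verit) mult_nonneg_nonneg)
qed

lemma continuous_on_mismatch: "continuous_on S (mismatch f p a b d)"
  unfolding mismatch_def[abs_def]
  by (intro continuous_intros continuous_on_xhat continuous_on_compose2[OF continuous_on_p continuous_on_xhat])
    auto

lemma bounded_mismatch: "bounded (range (mismatch f p a b d))"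
proof -
  have "compact ((\<lambda>x. d - x + p x) ` {a..b})"
    by (intro compact_continuous_image compact_Icc continuous_intros continuous_on_p)
  moreover have "range (mismatch f p a b d) \<subseteq> (\<lambda>x. d - x + p x) ` {a..b}"
    unfolding mismatch_def using xhat_mem by auto
  ultimately show ?thesis by (meson bounded_subset compact_imp_bounded)
qed

end

section \<open>Graph Laplacian\<close>

definition laplacian :: "(nat \<times> nat) set \<Rightarrow> (nat \<Rightarrow> real) \<Rightarrow> nat \<Rightarrow> real"
  where "laplacian E l i = (\<Sum>j\<in>{j. (j, i) \<in> E}. l j - l i)"

definition edge_energy :: "(nat \<times> nat) set \<Rightarrow> (nat \<Rightarrow> real) \<Rightarrow> real"
  where "edge_energy E l = (\<Sum>(j, i)\<in>E. (l j - l i)\<^sup>2)"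

definition disagreement :: "nat \<Rightarrow> (nat \<Rightarrow> real) \<Rightarrow> real"
  where "disagreement N l = (\<Sum>i<N. \<Sum>j<N. (l i - l j)\<^sup>2)"

lemma laplacian_uminus: "laplacian E (\<lambda>j. - l j) i = - laplacian E l i"
  unfolding laplacian_def by (simp add: sum_negf[symmetric])

lemma sum_swap_image:
  "(\<Sum>(i, j)\<in>prod.swap ` E. F j i) = (\<Sum>(j, i)\<in>E. F j i)"
  by (simp add: sum.reindex comp_def prod.case_eq_if)

lemma sum_neighbours_eq_sum_edges:
  fixes N :: nat
  assumes "E \<subseteq> {..<N} \<times> {..<N}"
  shows "(\<Sum>i<N. \<Sum>j\<in>{j. (j, i) \<in> E}. F j i) = (\<Sum>(j, i)\<in>E. F j i)"
proof -
  have "finite {j. (j, i) \<in> E}" for i using assms by (auto intro: finite_subset[of _ "{..<N}"])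
  hence "(\<Sum>i<N. \<Sum>j\<in>{j. (j, i) \<in> E}. F j i) = (\<Sum>(i, j)\<in>(SIGMA i:{..<N}. {j. (j, i) \<in> E}). F j i)"
    by (intro sum.Sigma) auto
  also have "(SIGMA i:{..<N}. {j. (j, i) \<in> E}) = prod.swap ` E" using assms by auto
  finally show ?thesis unfolding sum_swap_image .
qed

lemma sum_edges_swap:
  assumes "sym E"
  shows "(\<Sum>(j, i)\<in>E. F j i) = (\<Sum>(j, i)\<in>E. F i j)"
  using assms by (intro sum.reindex_bij_witness[of E prod.swap prod.swap]) (auto dest: symD)

lemma sum_laplacian:
  assumes "E \<subseteq> {..<N} \<times> {..<N}" "sym E"
  shows "(\<Sum>i<N. laplacian E l i) = 0"
proof -
  have "(\<Sum>(j, i)\<in>E. l j - l i) = (\<Sum>(j, i)\<in>E. l i - l j)" by (rule sum_edges_swap[OF assms(2)])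
  also have "\<dots> = - (\<Sum>(j, i)\<in>E. l j - l i)" by (simp add: sum_negf[symmetric] case_prod_beta)
  finally have "(\<Sum>(j, i)\<in>E. l j - l i) = 0" by simp
  thus ?thesis unfolding laplacian_def sum_neighbours_eq_sum_edges[OF assms(1)] .
qed

lemma sum_mult_laplacian:
  assumes "E \<subseteq> {..<N} \<times> {..<N}" "sym E"
  shows "(\<Sum>i<N. l i * laplacian E l i) = - edge_energy E l / 2"
proof -
  let ?S = "\<Sum>(j, i)\<in>E. l i * (l j - l i)"
  have "(\<Sum>i<N. l i * laplacian E l i) = ?S"
    unfolding laplacian_def sum_distrib_left by (rule sum_neighbours_eq_sum_edges[OF assms(1)])
  moreover have "?S = (\<Sum>(j, i)\<in>E. l j * (l i - l j))" by (rule sum_edges_swap[OF assms(2)])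
  hence "?S + ?S = (\<Sum>(j, i)\<in>E. l i * (l j - l i) + l j * (l i - l j))"
    by (simp add: sum.distrib case_prod_beta)
  also have "\<dots> = - edge_energy E l"
    unfolding edge_energy_def by (simp add: sum_negf[symmetric] case_prod_beta power2_eq_square algebra_simps)
  ultimately show ?thesis by simp
qed

lemma sum_sum_diff_mult_diff:
  "(\<Sum>i<N. \<Sum>j<N. (l i - l j) * (w i - w j))
    = 2 * real N * (\<Sum>i<N. l i * w i) - 2 * (\<Sum>i<N. l i) * (\<Sum>i<N. w i)"
proof -
  have "(\<Sum>i<N. \<Sum>j<N. (l i - l j) * (w i - w j))
      = (\<Sum>i<N. \<Sum>j<N. l i * w i + l j * w j - l i * w j - l j * w i)"
    by (simp add: algebra_simps)
  also have "\<dots> = (\<Sum>i<N. real N * (l i * w i) + (\<Sum>j<N. l j * w j)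
      - l i * (\<Sum>j<N. w j) - w i * (\<Sum>j<N. l j))"
    by (simp add: sum.distrib sum_subtractf sum_distrib_left mult.commute)
  also have "\<dots> = 2 * real N * (\<Sum>i<N. l i * w i) - 2 * (\<Sum>i<N. l i) * (\<Sum>i<N. w i)"
    by (simp add: sum.distrib sum_subtractf sum_distrib_right[symmetric] sum_distrib_left[symmetric]
        algebra_simps)
  finally show ?thesis .
qed

lemma edge_energy_nonneg: "0 \<le> edge_energy E l"
  unfolding edge_energy_def by (intro sum_nonneg) auto

lemma edge_le_edge_energy:
  assumes "finite E" "(j, i) \<in> E"
  shows "(l j - l i)\<^sup>2 \<le> edge_energy E l"
  unfolding edge_energy_def
  using member_le_sum[of "(j, i)" E "\<lambda>(j, i). (l j - l i)\<^sup>2"] assms by auto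

lemma path_le_edge_energy:
  assumes "finite E" "(i, j) \<in> E\<^sup>*"
  obtains C where "0 \<le> C" "\<And>l. (l i - l j)\<^sup>2 \<le> C * edge_energy E l"
  using assms(2)
proof (induction arbitrary: thesis rule: rtrancl_induct)
  case base show ?case by (rule base.prems[of 0]) simp_all
next
  case (step y z)
  obtain C where C: "0 \<le> C" "\<And>l. (l i - l y)\<^sup>2 \<le> C * edge_energy E l" using step.IH by blast
  have "(l i - l z)\<^sup>2 \<le> (2 * C + 2) * edge_energy E l" for l
  proof -
    have "(l i - l z)\<^sup>2 \<le> 2 * (l i - l y)\<^sup>2 + 2 * (l y - l z)\<^sup>2"
      using sum_squares_bound[of "l i - l y" "l y - l z"] by (simp add: power2_eq_square algebra_simps)
    also have "\<dots> \<le> 2 * (C * edge_energy E l) + 2 * edge_energy E l"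
      using C(2)[of l] edge_le_edge_energy[OF assms(1) step(2), of l] by linarith
    finally show ?thesis by (simp add: algebra_simps)
  qed
  thus ?case using C(1) by (intro step.prems[of "2 * C + 2"]) auto
qed

lemma disagreement_le_edge_energy:
  assumes nodes: "E \<subseteq> {..<N} \<times> {..<N}" and connected: "\<forall>i<N. \<forall>j<N. (i, j) \<in> E\<^sup>*"
  obtains C where "0 < C" "\<And>l. disagreement N l \<le> C * edge_energy E l"
proof -
  have "finite E" using nodes by (rule finite_subset) auto
  have "\<forall>ij\<in>{..<N} \<times> {..<N}. \<exists>C\<ge>0. \<forall>l. (l (fst ij) - l (snd ij))\<^sup>2 \<le> C * edge_energy E l"
    using path_le_edge_energy[OF \<open>finite E\<close>] connected by (metis SigmaE fst_conv lessThan_iff snd_conv)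
  then obtain Cp where Cp: "\<And>i j. i < N \<Longrightarrow> j < N \<Longrightarrow> 0 \<le> Cp (i, j)"
    "\<And>i j l. i < N \<Longrightarrow> j < N \<Longrightarrow> (l i - l j)\<^sup>2 \<le> Cp (i, j) * edge_energy E l"
    by (metis SigmaI fst_conv lessThan_iff snd_conv)
  define C where "C = 1 + (\<Sum>i<N. \<Sum>j<N. Cp (i, j))"
  have "0 \<le> (\<Sum>i<N. \<Sum>j<N. Cp (i, j))" using Cp(1) by (intro sum_nonneg) auto
  hence "0 < C" unfolding C_def by simp
  moreover have "disagreement N l \<le> C * edge_energy E l" for l
  proof -
    have "disagreement N l \<le> (\<Sum>i<N. \<Sum>j<N. Cp (i, j) * edge_energy E l)"
      unfolding disagreement_def using Cp(2) by (intro sum_mono) auto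
    also have "\<dots> = (\<Sum>i<N. \<Sum>j<N. Cp (i, j)) * edge_energy E l" by (simp add: sum_distrib_right)
    also have "\<dots> \<le> C * edge_energy E l"
      unfolding C_def using edge_energy_nonneg[of E l] by (intro mult_right_mono) auto
    finally show ?thesis .
  qed
  ultimately show ?thesis by (rule that)
qed

lemma square_le_disagreement:
  assumes "i < N" "j < N"
  shows "(l i - l j)\<^sup>2 \<le> disagreement N l"
proof -
  have "(l i - l j)\<^sup>2 \<le> (\<Sum>j'<N. (l i - l j')\<^sup>2)"
    using member_le_sum[of j "{..<N}" "\<lambda>j'. (l i - l j')\<^sup>2"] assms by auto
  also have "\<dots> \<le> disagreement N l"
    unfolding disagreement_def using assms
    by (intro member_le_sum[of i "{..<N}" "\<lambda>i. \<Sum>j'<N. (l i - l j')\<^sup>2"]) (auto intro: sum_nonneg)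
  finally show ?thesis .
qed

section \<open>The consensus dynamics\<close>

definition clustered :: "nat \<Rightarrow> real \<Rightarrow> real \<Rightarrow> (real \<Rightarrow> nat \<Rightarrow> real) \<Rightarrow> bool"
  where "clustered N rho T0 lam \<longleftrightarrow> (\<forall>s\<ge>T0. \<forall>i<N. \<forall>j<N. \<bar>lam s i - lam s j\<bar> \<le> rho)"

text \<open>The time by which the sum of the dual variables, moving at rate at most \<open>N B\<close> before \<open>T0\<close>
  and falling at rate \<open>eta\<close> afterwards, has reached \<open>N (U + rho)\<close>.\<close>
definition settle_time :: "nat \<Rightarrow> real \<Rightarrow> real \<Rightarrow> real \<Rightarrow> real \<Rightarrow> (real \<Rightarrow> nat \<Rightarrow> real) \<Rightarrow> real \<Rightarrow> real"
  where "settle_time N B eta U rho lam T0 = T0 + (\<bar>\<Sum>i<N. lam 0 i\<bar> + N * B * T0 + N * \<bar>U + rho\<bar>) / eta"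

lemma clustered_uminus: "clustered N rho T0 (\<lambda>t i. - lam t i) \<longleftrightarrow> clustered N rho T0 lam"
  unfolding clustered_def by (simp add: abs_minus_commute)

lemma settle_time_uminus: "settle_time N B eta U rho (\<lambda>t i. - lam t i) T0 = settle_time N B eta U rho lam T0"
  unfolding settle_time_def by (simp add: sum_negf)

lemma abs_sum_sub_mult_le:
  fixes l :: "nat \<Rightarrow> real"
  assumes "\<And>j. j < N \<Longrightarrow> \<bar>l i - l j\<bar> \<le> rho"
  shows "\<bar>N * l i - (\<Sum>j<N. l j)\<bar> \<le> N * rho"
proof -
  have "\<bar>N * l i - (\<Sum>j<N. l j)\<bar> = \<bar>\<Sum>j<N. l i - l j\<bar>" by (simp add: sum_subtractf)
  also have "\<dots> \<le> (\<Sum>j<N. \<bar>l i - l j\<bar>)" by (rule sum_abs)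
  also have "\<dots> \<le> N * rho" using sum_bounded_above[of "{..<N}" "\<lambda>j. \<bar>l i - l j\<bar>" rho] assms by simp
  finally show ?thesis .
qed

locale dual_dynamics =
  fixes N :: nat and E :: "(nat \<times> nat) set" and h :: "nat \<Rightarrow> real \<Rightarrow> real" and B :: real
  assumes nodes: "E \<subseteq> {..<N} \<times> {..<N}" and sym: "sym E"
    and connected: "\<forall>i<N. \<forall>j<N. (i, j) \<in> E\<^sup>*"
    and antimono_h: "\<And>i. i < N \<Longrightarrow> antimono (h i)"
    and continuous_h: "\<And>i. i < N \<Longrightarrow> continuous_on UNIV (h i)"
    and bounded_h: "\<And>i lam. i < N \<Longrightarrow> \<bar>h i lam\<bar> \<le> B"
begin

definition aggregate :: "real \<Rightarrow> real"
  where "aggregate lam = (\<Sum>i<N. h i lam)"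

definition drift :: "real \<Rightarrow> (nat \<Rightarrow> real) \<Rightarrow> nat \<Rightarrow> real"
  where "drift k l i = h i (l i) + k * laplacian E l i"

definition solves :: "real \<Rightarrow> (real \<Rightarrow> nat \<Rightarrow> real) \<Rightarrow> bool"
  where "solves k lam \<longleftrightarrow>
    (\<forall>i<N. \<forall>t\<ge>0. ((\<lambda>s. lam s i) has_real_derivative drift k (lam t) i) (at t within {0..}))"

lemma antimono_aggregate: "antimono aggregate"
proof (rule antimonoI)
  fix x y :: real assume "x \<le> y"
  thus "aggregate y \<le> aggregate x"
    unfolding aggregate_def using antimonoD[OF antimono_h] by (intro sum_mono) blast
qed

lemma continuous_on_aggregate: "continuous_on UNIV aggregate"
  unfolding aggregate_def[abs_def] by (intro continuous_on_sum continuous_h) simp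

text \<open>All \<open>h i\<close> move in the same direction, so none of them can move more than their sum.\<close>
lemma abs_diff_le_aggregate:
  assumes "i < N"
  shows "\<bar>h i x - h i y\<bar> \<le> \<bar>aggregate x - aggregate y\<bar>"
proof -
  have le: "\<bar>h i x - h i y\<bar> \<le> \<bar>aggregate x - aggregate y\<bar>" if "x \<le> y" for x y
  proof -
    have nonneg: "0 \<le> h j x - h j y" if "j < N" for j
      using antimonoD[OF antimono_h[OF that] \<open>x \<le> y\<close>] by simp
    have "\<bar>h i x - h i y\<bar> = h i x - h i y" using nonneg[OF assms] by simp
    also have "\<dots> \<le> (\<Sum>j<N. h j x - h j y)"
      using member_le_sum[of i "{..<N}" "\<lambda>j. h j x - h j y"] nonneg assms by simp
    also have "\<dots> \<le> \<bar>aggregate x - aggregate y\<bar>" unfolding aggregate_def by (simp add: sum_subtractf)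
    finally show ?thesis .
  qed
  show ?thesis using le[of x y] le[of y x] by (cases "x \<le> y") (simp_all add: abs_minus_commute)
qed

lemma sum_drift: "(\<Sum>i<N. drift k l i) = (\<Sum>i<N. h i (l i))"
  using sum_laplacian[OF nodes sym, of l]
  by (simp add: drift_def sum.distrib sum_distrib_left[symmetric])

lemma has_real_derivative_sum_solution:
  assumes "solves k lam" "0 \<le> t"
  shows "((\<lambda>s. \<Sum>i<N. lam s i) has_real_derivative (\<Sum>i<N. h i (lam t i))) (at t within {0..})"
proof -
  have "((\<lambda>s. \<Sum>i<N. lam s i) has_real_derivative (\<Sum>i<N. drift k (lam t) i)) (at t within {0..})"
    using assms unfolding solves_def by (intro DERIV_sum) auto
  thus ?thesis by (simp only: sum_drift)
qed

lemma abs_sum_h_le: "\<bar>\<Sum>i<N. h i (l i)\<bar> \<le> N * B"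
proof -
  have "\<bar>\<Sum>i<N. h i (l i)\<bar> \<le> (\<Sum>i<N. \<bar>h i (l i)\<bar>)" by (rule sum_abs)
  also have "\<dots> \<le> N * B" using sum_bounded_above[of "{..<N}" "\<lambda>i. \<bar>h i (l i)\<bar>" B] bounded_h by simp
  finally show ?thesis .
qed

lemma sum_solution_drift:
  assumes "solves k lam" "0 \<le> T"
  shows "\<bar>(\<Sum>i<N. lam T i) - (\<Sum>i<N. lam 0 i)\<bar> \<le> N * B * T"
proof -
  have "norm ((\<Sum>i<N. lam T i) - (\<Sum>i<N. lam 0 i)) \<le> N * B * norm (T - 0)"
  proof (rule field_differentiable_bound[of "{0..T}"])
    fix t assume "t \<in> {0..T}"
    hence "((\<lambda>s. \<Sum>i<N. lam s i) has_field_derivative (\<Sum>i<N. h i (lam t i))) (at t within {0..})"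
      by (intro has_real_derivative_sum_solution[OF assms(1)]) auto
    thus "((\<lambda>s. \<Sum>i<N. lam s i) has_field_derivative (\<Sum>i<N. h i (lam t i))) (at t within {0..T})"
      by (rule DERIV_subset) auto
    show "norm (\<Sum>i<N. h i (lam t i)) \<le> N * B" using abs_sum_h_le by simp
  qed (use assms(2) in auto)
  thus ?thesis using assms(2) by simp
qed

lemma has_real_derivative_disagreement:
  assumes "solves k lam" "0 \<le> t"
  shows "((\<lambda>s. disagreement N (lam s)) has_real_derivative
    (\<Sum>i<N. \<Sum>j<N. 2 * (lam t i - lam t j) * (drift k (lam t) i - drift k (lam t) j))) (at t within {0..})"
  using assms unfolding disagreement_def solves_def
  by (intro DERIV_sum) (auto intro!: derivative_eq_intros)

lemma bound_nonneg: "0 < N \<Longrightarrow> 0 \<le> B"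
  using bounded_h[of 0 0] by simp

text \<open>The consensus term contributes \<open>-2 k N\<close> times the edge energy, which by connectivity
  dominates the disagreement; the local terms are absorbed by AM-GM with weight \<open>k N / C\<close>.\<close>
lemma disagreement_drift_le:
  fixes k C :: real
  assumes "0 < k" "0 < N" "0 < C" and coercive: "\<And>l. disagreement N l \<le> C * edge_energy E l"
  shows "(\<Sum>i<N. \<Sum>j<N. 2 * (l i - l j) * (drift k l i - drift k l j))
    \<le> - (k * N / C) * disagreement N l + 4 * N * B\<^sup>2 * C / k"
proof -
  define th where "th = k * N / C"
  have th: "0 < th" unfolding th_def using assms by simp
  let ?u = "laplacian E l"
  have "(\<Sum>i<N. \<Sum>j<N. 2 * (l i - l j) * (drift k l i - drift k l j))
    = (\<Sum>i<N. \<Sum>j<N. 2 * (l i - l j) * (h i (l i) - h j (l j)))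
      + 2 * k * (\<Sum>i<N. \<Sum>j<N. (l i - l j) * (?u i - ?u j))"
  proof -
    have "(\<Sum>i<N. \<Sum>j<N. 2 * (l i - l j) * (drift k l i - drift k l j))
      = (\<Sum>i<N. \<Sum>j<N. 2 * (l i - l j) * (h i (l i) - h j (l j))
          + 2 * k * ((l i - l j) * (?u i - ?u j)))"
      unfolding drift_def by (simp add: algebra_simps)
    thus ?thesis by (simp add: sum.distrib sum_distrib_left)
  qed
  also have "(\<Sum>i<N. \<Sum>j<N. (l i - l j) * (?u i - ?u j)) = - (N * edge_energy E l)"
    unfolding sum_sum_diff_mult_diff sum_laplacian[OF nodes sym] sum_mult_laplacian[OF nodes sym] by simp
  also have "(\<Sum>i<N. \<Sum>j<N. 2 * (l i - l j) * (h i (l i) - h j (l j)))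
      \<le> (\<Sum>i<N. \<Sum>j<N. th * (l i - l j)\<^sup>2 + 4 * B\<^sup>2 / th)"
    using bounded_h th by (intro sum_mono abs_mult_diff_le_amgm) auto
  also have "\<dots> = th * disagreement N l + N * N * (4 * B\<^sup>2 / th)"
    unfolding disagreement_def by (simp add: sum.distrib sum_distrib_left)
  also have "2 * k * - (N * edge_energy E l) \<le> 2 * k * - (N * (disagreement N l / C))"
    using coercive[of l] assms by (simp add: field_simps)
  also have "th * disagreement N l + N * N * (4 * B\<^sup>2 / th) + 2 * k * - (N * (disagreement N l / C))
      = - (k * N / C) * disagreement N l + 4 * N * B\<^sup>2 * C / k"
    unfolding th_def using assms by (simp add: field_simps)
  finally show ?thesis by simp
qed

lemma disagreement_le_after:
  fixes k C rho :: real
  assumes coercive: "0 < C" "\<And>l. disagreement N l \<le> C * edge_energy E l"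
    and "0 < N" and k: "1 \<le> k" "1 + 4 * N * B\<^sup>2 * C \<le> k * N * rho\<^sup>2 / C"
    and sol: "solves k lam" and t: "disagreement N (lam 0) \<le> t"
  shows "disagreement N (lam t) \<le> rho\<^sup>2"
proof -
  let ?D' = "\<lambda>s. \<Sum>i<N. \<Sum>j<N. 2 * (lam s i - lam s j) * (drift k (lam s) i - drift k (lam s) j)"
  have "0 \<le> disagreement N (lam 0)" unfolding disagreement_def by (intro sum_nonneg) auto
  hence "0 \<le> t" using t by simp
  have "disagreement N (lam t) \<le> max (rho\<^sup>2) (disagreement N (lam 0) - 1 * (t - 0))"
  proof (rule descent_above_level[where g' = ?D'])
    fix s :: real assume s: "0 \<le> s" "rho\<^sup>2 < disagreement N (lam s)"
    have "?D' s \<le> - (k * N / C) * disagreement N (lam s) + 4 * N * B\<^sup>2 * C / k"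
      using k assms by (intro disagreement_drift_le) auto
    also have "\<dots> \<le> - (k * N * rho\<^sup>2 / C) + 4 * N * B\<^sup>2 * C"
    proof (rule add_mono)
      show "- (k * N / C) * disagreement N (lam s) \<le> - (k * N * rho\<^sup>2 / C)"
        using s k coercive \<open>0 < N\<close> by (simp add: field_simps mult_strict_left_mono less_imp_le)
      have "0 \<le> 4 * N * B\<^sup>2 * C" using coercive by simp
      thus "4 * N * B\<^sup>2 * C / k \<le> 4 * N * B\<^sup>2 * C" using k by (simp add: divide_le_eq mult_le_cancel_left1)
    qed
    also have "\<dots> \<le> - 1" using k by linarith
    finally show "?D' s \<le> - 1" .
  qed (use has_real_derivative_disagreement[OF sol] \<open>0 \<le> t\<close> in auto)
  moreover have "disagreement N (lam 0) - 1 * (t - 0) \<le> rho\<^sup>2"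
    using t by (smt (verit) zero_le_power2)
  ultimately show ?thesis by simp
qed

lemma consensus_phase:
  fixes rho :: real
  assumes "0 < rho" "0 < N"
  obtains kbar where "0 < kbar"
    "\<And>k lam. kbar < k \<Longrightarrow> solves k lam \<Longrightarrow> clustered N rho (disagreement N (lam 0)) lam"
proof -
  obtain C where C: "0 < C" "\<And>l. disagreement N l \<le> C * edge_energy E l"
    using disagreement_le_edge_energy[OF nodes connected] by blast
  define kbar where "kbar = 1 + C * (1 + 4 * N * B\<^sup>2 * C) / (N * rho\<^sup>2)"
  have "0 \<le> C * (1 + 4 * N * B\<^sup>2 * C) / (N * rho\<^sup>2)" using C by simp
  hence "0 < kbar" unfolding kbar_def by linarith
  moreover have "\<bar>lam t i - lam t j\<bar> \<le> rho"
    if k: "kbar < k" and sol: "solves k lam" and t: "disagreement N (lam 0) \<le> t" and "i < N" "j < N"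
    for k lam t i j
  proof -
    have pos: "0 < N * rho\<^sup>2" using assms by simp
    have "C * (1 + 4 * N * B\<^sup>2 * C) / (N * rho\<^sup>2) \<le> k" using k \<open>0 < kbar\<close> unfolding kbar_def by linarith
    hence "1 + 4 * N * B\<^sup>2 * C \<le> k * N * rho\<^sup>2 / C"
      using pos C(1) by (simp add: divide_le_eq le_divide_eq mult_ac)
    moreover have "1 \<le> k" using k \<open>0 \<le> C * (1 + 4 * N * B\<^sup>2 * C) / (N * rho\<^sup>2)\<close> unfolding kbar_def by linarith
    ultimately have "disagreement N (lam t) \<le> rho\<^sup>2"
      using disagreement_le_after[OF C \<open>0 < N\<close> _ _ sol t] by blast
    hence "(lam t i - lam t j)\<^sup>2 \<le> rho\<^sup>2" using square_le_disagreement[OF \<open>i < N\<close> \<open>j < N\<close>, of "lam t"] by linarith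
    thus ?thesis using \<open>0 < rho\<close> by (simp add: power2_le_iff_abs_le)
  qed
  ultimately show ?thesis using that unfolding clustered_def by blast
qed

lemma clustered_abs_sum_sub_mult_le:
  fixes lam :: "real \<Rightarrow> nat \<Rightarrow> real" and rho :: real
  assumes "clustered N rho T0 lam" "T0 \<le> s" "j < N"
  shows "\<bar>N * lam s j - (\<Sum>i<N. lam s i)\<bar> \<le> N * rho"
  using assms unfolding clustered_def by (intro abs_sum_sub_mult_le) auto

text \<open>For \<open>rho\<close>-close dual variables, a sum above \<open>N (U + rho)\<close> puts all of them above \<open>U\<close>.\<close>
lemma sum_h_le_aggregate:
  fixes lam :: "real \<Rightarrow> nat \<Rightarrow> real" and rho U :: real
  assumes "clustered N rho T0 lam" "T0 \<le> s" "N * (U + rho) < (\<Sum>i<N. lam s i)"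
  shows "(\<Sum>j<N. h j (lam s j)) \<le> aggregate U"
  unfolding aggregate_def
proof (rule sum_mono)
  fix j assume "j \<in> {..<N}"
  hence "(\<Sum>i<N. lam s i) - N * rho \<le> N * lam s j"
    using clustered_abs_sum_sub_mult_le[OF assms(1,2), of j] by (simp add: abs_le_iff)
  moreover have "N * (U + rho) = N * U + N * rho" by (simp add: distrib_left)
  ultimately have "N * U < N * lam s j" using assms(3) by linarith
  hence "U \<le> lam s j" using mult_less_cancel_left_pos[of "real N" U "lam s j"] by fastforce
  thus "h j (lam s j) \<le> h j U" using antimonoD[OF antimono_h] \<open>j \<in> {..<N}\<close> by simp
qed

lemma averaging_upper:
  fixes rho eta U T0 t :: real
  assumes sol: "solves k lam" and "0 \<le> T0" and "clustered N rho T0 lam"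
    and "0 < eta" and U: "aggregate U \<le> - eta" and t: "settle_time N B eta U rho lam T0 \<le> t"
    and "i < N"
  shows "lam t i \<le> U + 2 * rho"
proof -
  let ?L = "\<lambda>s. \<Sum>j<N. lam s j"
  have "0 \<le> N * B" using bound_nonneg \<open>i < N\<close> by simp
  hence "0 \<le> (\<bar>\<Sum>i<N. lam 0 i\<bar> + N * B * T0 + N * \<bar>U + rho\<bar>) / eta"
    using \<open>0 \<le> T0\<close> \<open>0 < eta\<close> by simp
  hence "T0 \<le> t" using t unfolding settle_time_def by linarith
  have "?L t \<le> max (N * (U + rho)) (?L T0 - eta * (t - T0))"
  proof (rule descent_above_level[where g' = "\<lambda>s. \<Sum>j<N. h j (lam s j)"])
    fix s assume "T0 \<le> s"
    hence "(?L has_real_derivative (\<Sum>j<N. h j (lam s j))) (at s within {0..})"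
      using \<open>0 \<le> T0\<close> by (intro has_real_derivative_sum_solution[OF sol]) auto
    thus "(?L has_real_derivative (\<Sum>j<N. h j (lam s j))) (at s within {T0..})"
      by (rule DERIV_subset) (use \<open>0 \<le> T0\<close> in auto)
  next
    fix s assume "T0 \<le> s" "N * (U + rho) < ?L s"
    thus "(\<Sum>j<N. h j (lam s j)) \<le> - eta"
      using sum_h_le_aggregate[OF \<open>clustered N rho T0 lam\<close>] U by fastforce
  qed (use \<open>0 < eta\<close> \<open>T0 \<le> t\<close> in auto)
  moreover have "?L T0 - eta * (t - T0) \<le> N * (U + rho)"
  proof -
    have "\<bar>\<Sum>i<N. lam 0 i\<bar> + N * B * T0 + N * \<bar>U + rho\<bar> \<le> eta * (t - T0)"
      using t \<open>0 < eta\<close> unfolding settle_time_def by (simp add: field_simps)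
    moreover have "?L T0 \<le> ?L 0 + N * B * T0" using sum_solution_drift[OF sol \<open>0 \<le> T0\<close>] by linarith
    moreover have "- (N * (U + rho)) \<le> N * \<bar>U + rho\<bar>"
      by (metis abs_ge_minus_self mult_left_mono mult_minus_right of_nat_0_le_iff)
    ultimately show ?thesis by linarith
  qed
  ultimately have "?L t \<le> N * (U + rho)" by simp
  moreover have "N * lam t i \<le> ?L t + N * rho"
    using clustered_abs_sum_sub_mult_le[OF \<open>clustered N rho T0 lam\<close> \<open>T0 \<le> t\<close> \<open>i < N\<close>] by linarith
  ultimately have "N * lam t i \<le> N * (U + 2 * rho)" by (simp add: algebra_simps)
  thus ?thesis using \<open>i < N\<close> by simp
qed

text \<open>Reflecting \<open>\<lambda> \<mapsto> -\<lambda>\<close> turns lower bounds on the dual variables into upper bounds.\<close>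
lemma dual_dynamics_reflect: "dual_dynamics N E (\<lambda>i lam. - h i (- lam)) B"
proof
  fix i assume i: "i < N"
  show "antimono (\<lambda>lam. - h i (- lam))"
    by (rule antimonoI) (simp add: antimonoD[OF antimono_h[OF i]])
  show "continuous_on UNIV (\<lambda>lam. - h i (- lam))"
    by (intro continuous_intros continuous_on_compose2[OF continuous_h[OF i]]) auto
  show "\<bar>- h i (- lam)\<bar> \<le> B" for lam using bounded_h[OF i] by simp
qed (use nodes sym connected in auto)

lemma solves_reflect:
  assumes "solves k lam"
  shows "dual_dynamics.solves N E (\<lambda>i lam. - h i (- lam)) k (\<lambda>t i. - lam t i)"
proof -
  interpret r: dual_dynamics N E "\<lambda>i lam. - h i (- lam)" B by (rule dual_dynamics_reflect)
  show ?thesis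
    using assms unfolding solves_def r.solves_def drift_def r.drift_def laplacian_uminus
    by (auto intro!: derivative_eq_intros)
qed

lemma aggregate_reflect: "dual_dynamics.aggregate N (\<lambda>i lam. - h i (- lam)) mu = - aggregate (- mu)"
proof -
  interpret r: dual_dynamics N E "\<lambda>i lam. - h i (- lam)" B by (rule dual_dynamics_reflect)
  show ?thesis unfolding r.aggregate_def aggregate_def by (simp add: sum_negf)
qed

lemma eventually_aggregate_ge:
  fixes eta :: real
  assumes "0 < eta" "aggregate x0 = 0"
  obtains U r :: real where "0 < r" "\<And>k lam rho T0 t i. solves k lam \<Longrightarrow> 0 \<le> T0 \<Longrightarrow> rho \<le> r \<Longrightarrow>
    clustered N rho T0 lam \<Longrightarrow> settle_time N B (eta / 2) U rho lam T0 \<le> t \<Longrightarrow> i < N \<Longrightarrow>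
    - eta \<le> aggregate (lam t i)"
proof -
  obtain U r where "0 < r" and margin: "\<And>mu. mu \<le> U + r \<Longrightarrow> - eta \<le> aggregate mu"
    and U: "aggregate U \<le> - (eta / 2) \<or> (\<forall>mu. - eta \<le> aggregate mu)"
    using antimono_continuous_margin[OF antimono_aggregate continuous_on_aggregate assms(2,1)] by blast
  show ?thesis
  proof (rule that[of "r / 2" U])
    fix k lam rho T0 t i
    assume sol: "solves k lam" and "0 \<le> T0" "rho \<le> r / 2" "clustered N rho T0 lam"
      and t: "settle_time N B (eta / 2) U rho lam T0 \<le> t" and "i < N"
    show "- eta \<le> aggregate (lam t i)"
    proof (cases "\<forall>mu. - eta \<le> aggregate mu")
      case False
      hence "aggregate U \<le> - (eta / 2)" using U by blast
      with \<open>0 < eta\<close> have "lam t i \<le> U + 2 * rho"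
        by (intro averaging_upper[OF sol \<open>0 \<le> T0\<close> \<open>clustered N rho T0 lam\<close> _ _ t \<open>i < N\<close>]) simp_all
      thus ?thesis using \<open>rho \<le> r / 2\<close> by (intro margin) simp
    qed simp
  qed (use \<open>0 < r\<close> in simp)
qed

lemma eventually_aggregate_le:
  fixes eta :: real
  assumes "0 < eta" "aggregate x0 = 0"
  obtains U r :: real where "0 < r" "\<And>k lam rho T0 t i. solves k lam \<Longrightarrow> 0 \<le> T0 \<Longrightarrow> rho \<le> r \<Longrightarrow>
    clustered N rho T0 lam \<Longrightarrow> settle_time N B (eta / 2) U rho lam T0 \<le> t \<Longrightarrow> i < N \<Longrightarrow>
    aggregate (lam t i) \<le> eta"
proof -
  interpret reflected: dual_dynamics N E "\<lambda>i lam. - h i (- lam)" B by (rule dual_dynamics_reflect)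
  have "reflected.aggregate (- x0) = 0" using assms(2) by (simp add: aggregate_reflect)
  with assms(1) show ?thesis
  proof (rule reflected.eventually_aggregate_ge)
    fix U r :: real
    assume "0 < r" and ge: "\<And>k lam rho T0 t i. reflected.solves k lam \<Longrightarrow> 0 \<le> T0 \<Longrightarrow> rho \<le> r \<Longrightarrow>
      clustered N rho T0 lam \<Longrightarrow> settle_time N B (eta / 2) U rho lam T0 \<le> t \<Longrightarrow> i < N \<Longrightarrow>
      - eta \<le> reflected.aggregate (lam t i)"
    show ?thesis
    proof (rule that[OF \<open>0 < r\<close>])
      fix k lam rho T0 t i
      assume "solves k lam" "0 \<le> T0" "rho \<le> r" "clustered N rho T0 lam"
        "settle_time N B (eta / 2) U rho lam T0 \<le> t" "i < N"
      hence "- eta \<le> reflected.aggregate (- lam t i)"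
        using ge[OF solves_reflect, of k lam T0 rho t i] by (simp add: clustered_uminus settle_time_uminus)
      thus "aggregate (lam t i) \<le> eta" by (simp add: aggregate_reflect)
    qed
  qed
qed

lemma eventually_abs_aggregate_le:
  fixes eta :: real
  assumes "0 < eta" "aggregate x0 = 0"
  obtains kbar T where "0 < kbar" "\<And>k lam0 lam i t. kbar < k \<Longrightarrow> solves k lam \<Longrightarrow>
    (\<forall>i<N. lam 0 i = lam0 i) \<Longrightarrow> i < N \<Longrightarrow> T lam0 \<le> t \<Longrightarrow> \<bar>aggregate (lam t i)\<bar> \<le> eta"
proof (cases "N = 0")
  case True
  thus ?thesis using that[of 1] by simp
next
  case False
  obtain U1 r1 U2 r2 :: real where "0 < r1" "0 < r2"
    and ge: "\<And>k lam rho T0 t i. solves k lam \<Longrightarrow> 0 \<le> T0 \<Longrightarrow> rho \<le> r1 \<Longrightarrow> clustered N rho T0 lam \<Longrightarrow>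
      settle_time N B (eta / 2) U1 rho lam T0 \<le> t \<Longrightarrow> i < N \<Longrightarrow> - eta \<le> aggregate (lam t i)"
    and le: "\<And>k lam rho T0 t i. solves k lam \<Longrightarrow> 0 \<le> T0 \<Longrightarrow> rho \<le> r2 \<Longrightarrow> clustered N rho T0 lam \<Longrightarrow>
      settle_time N B (eta / 2) U2 rho lam T0 \<le> t \<Longrightarrow> i < N \<Longrightarrow> aggregate (lam t i) \<le> eta"
    using eventually_aggregate_ge[OF assms] eventually_aggregate_le[OF assms] by metis
  define rho where "rho = min r1 r2"
  have "0 < rho" using \<open>0 < r1\<close> \<open>0 < r2\<close> unfolding rho_def by simp
  obtain kbar where "0 < kbar"
    and consensus: "\<And>k lam. kbar < k \<Longrightarrow> solves k lam \<Longrightarrow> clustered N rho (disagreement N (lam 0)) lam"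
    using consensus_phase[OF \<open>0 < rho\<close>] False by blast
  define T where "T lam0 = max (settle_time N B (eta / 2) U1 rho (\<lambda>_. lam0) (disagreement N lam0))
    (settle_time N B (eta / 2) U2 rho (\<lambda>_. lam0) (disagreement N lam0))" for lam0
  show ?thesis
  proof (rule that[of kbar T])
    fix k lam0 lam i t
    assume "kbar < k" and sol: "solves k lam" and init: "\<forall>i<N. lam 0 i = lam0 i" and "i < N"
      and "T lam0 \<le> t"
    have "0 \<le> disagreement N (lam 0)" unfolding disagreement_def by (intro sum_nonneg) auto
    have cl: "clustered N rho (disagreement N (lam 0)) lam" by (rule consensus[OF \<open>kbar < k\<close> sol])
    have "settle_time N B (eta / 2) U rho lam (disagreement N (lam 0))
      = settle_time N B (eta / 2) U rho (\<lambda>_. lam0) (disagreement N lam0)" for U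
      unfolding settle_time_def disagreement_def using init by simp
    hence "settle_time N B (eta / 2) U1 rho lam (disagreement N (lam 0)) \<le> t"
      "settle_time N B (eta / 2) U2 rho lam (disagreement N (lam 0)) \<le> t"
      using \<open>T lam0 \<le> t\<close> unfolding T_def by simp_all
    hence "- eta \<le> aggregate (lam t i)" "aggregate (lam t i) \<le> eta"
      using ge[OF sol \<open>0 \<le> disagreement N (lam 0)\<close> _ cl _ \<open>i < N\<close>]
        le[OF sol \<open>0 \<le> disagreement N (lam 0)\<close> _ cl _ \<open>i < N\<close>] unfolding rho_def by simp_all
    thus "\<bar>aggregate (lam t i)\<bar> \<le> eta" by simp
  qed (fact \<open>0 < kbar\<close>)
qed

end

section \<open>The dispatch problem\<close>

locale dispatch_problem =
  fixes N :: nat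
    and d xl xu :: "nat \<Rightarrow> real"
    and f phi :: "nat \<Rightarrow> real \<Rightarrow> real"
    and E :: "(nat \<times> nat) set"
    and lamstar :: real
  assumes agents: "\<And>i. i < N \<Longrightarrow> agent (f i) (phi i) (xl i) (xu i)"
    and nodes: "E \<subseteq> {..<N} \<times> {..<N}" and sym: "sym E"
    and connected: "\<forall>i<N. \<forall>j<N. (i, j) \<in> E\<^sup>*"
    and maximizer: "\<forall>lam. gm N f phi d xl xu lam \<le> gm N f phi d xl xu lamstar"
begin

abbreviation mm :: "nat \<Rightarrow> real \<Rightarrow> real"
  where "mm i \<equiv> mismatch (f i) (phi i) (xl i) (xu i) (d i)"

lemma gm_supergradient: "gm N f phi d xl xu mu \<le> gm N f phi d xl xu lam + (mu - lam) * (\<Sum>i<N. mm i lam)"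
proof -
  have "gm N f phi d xl xu mu \<le> (\<Sum>i<N. lagr_loc (f i) (phi i) (d i) (xhat (f i) (phi i) (xl i) (xu i) lam) lam
      + (mu - lam) * mm i lam)"
    unfolding gm_def by (intro sum_mono agent.lagr_loc_xhat_supergradient agents) simp
  thus ?thesis unfolding gm_def by (simp add: sum.distrib sum_distrib_left)
qed

lemma sum_mismatch_lamstar: "(\<Sum>i<N. mm i lamstar) = 0"
proof (rule continuous_sign_change_imp_eq_0[where H = "\<lambda>lam. \<Sum>i<N. mm i lam"])
  have "isCont (mm i) lamstar" if "i < N" for i
    using agent.continuous_on_mismatch[OF agents[OF that], of UNIV "d i"]
    by (simp add: continuous_on_eq_continuous_at)
  thus "isCont (\<lambda>lam. \<Sum>i<N. mm i lam) lamstar" by (intro continuous_intros) simp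
next
  fix mu
  have "0 \<le> (lamstar - mu) * (\<Sum>i<N. mm i mu)"
    using gm_supergradient[of lamstar mu] spec[OF maximizer, of mu] by linarith
  thus "lamstar < mu \<Longrightarrow> (\<Sum>i<N. mm i mu) \<le> 0" "mu < lamstar \<Longrightarrow> 0 \<le> (\<Sum>i<N. mm i mu)"
    by (simp_all add: zero_le_mult_iff)
qed

lemma uniform_mismatch_bound: "\<exists>B. \<forall>i<N. \<forall>lam. \<bar>mm i lam\<bar> \<le> B"
proof -
  have "bounded (\<Union>i<N. range (mm i))" using agent.bounded_mismatch[OF agents] by auto
  then obtain B where B: "\<And>x. x \<in> (\<Union>i<N. range (mm i)) \<Longrightarrow> norm x \<le> B"
    unfolding bounded_iff by blast
  have "\<bar>mm i lam\<bar> \<le> B" if "i < N" for i lam using B[of "mm i lam"] that by auto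
  thus ?thesis by blast
qed

definition mismatch_bound :: real
  where "mismatch_bound = (SOME B. \<forall>i<N. \<forall>lam. \<bar>mm i lam\<bar> \<le> B)"

sublocale dyn: dual_dynamics N E mm mismatch_bound
proof
  show "\<And>i lam. i < N \<Longrightarrow> \<bar>mm i lam\<bar> \<le> mismatch_bound"
    using someI_ex[OF uniform_mismatch_bound] unfolding mismatch_bound_def by blast
qed (use nodes sym connected agent.antimono_mismatch[OF agents] agent.continuous_on_mismatch[OF agents]
  in auto)

lemma uniform_mismatch_expanding:
  obtains c where "0 < c" "\<And>i lam mu. i < N \<Longrightarrow>
    c * \<bar>xhat (f i) (phi i) (xl i) (xu i) lam - xhat (f i) (phi i) (xl i) (xu i) mu\<bar> \<le> \<bar>mm i lam - mm i mu\<bar>"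
proof -
  have "\<exists>c>0. \<forall>lam mu. c * \<bar>xhat (f i) (phi i) (xl i) (xu i) lam - xhat (f i) (phi i) (xl i) (xu i) mu\<bar>
      \<le> \<bar>mm i lam - mm i mu\<bar>" if "i < N" for i
  proof (rule agent.mismatch_expanding[OF agents[OF that], of "d i"])
    fix c assume "0 < c" and c: "\<And>lam mu. lam \<le> mu \<Longrightarrow> c * (xhat (f i) (phi i) (xl i) (xu i) mu
      - xhat (f i) (phi i) (xl i) (xu i) lam) \<le> mm i lam - mm i mu"
    have "c * \<bar>xhat (f i) (phi i) (xl i) (xu i) lam - xhat (f i) (phi i) (xl i) (xu i) mu\<bar>
      \<le> \<bar>mm i lam - mm i mu\<bar>" for lam mu
      using c[of lam mu] c[of mu lam] monoD[OF agent.mono_xhat[OF agents[OF that]], of lam mu]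
        monoD[OF agent.mono_xhat[OF agents[OF that]], of mu lam]
      by (cases "lam \<le> mu") (auto simp: abs_if split: if_splits)
    thus ?thesis using \<open>0 < c\<close> by blast
  qed
  then obtain ci where ci: "\<And>i. i < N \<Longrightarrow> 0 < ci i" "\<And>i lam mu. i < N \<Longrightarrow>
      ci i * \<bar>xhat (f i) (phi i) (xl i) (xu i) lam - xhat (f i) (phi i) (xl i) (xu i) mu\<bar>
      \<le> \<bar>mm i lam - mm i mu\<bar>"
    by metis
  define c where "c = Min (insert 1 (ci ` {..<N}))"
  have "0 < c" unfolding c_def using ci(1) by (subst Min_gr_iff) auto
  moreover have "c * \<bar>xhat (f i) (phi i) (xl i) (xu i) lam - xhat (f i) (phi i) (xl i) (xu i) mu\<bar>
      \<le> \<bar>mm i lam - mm i mu\<bar>" if "i < N" for i lam mu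
  proof -
    have "c \<le> ci i" unfolding c_def using that by (intro Min_le) auto
    hence "c * \<bar>xhat (f i) (phi i) (xl i) (xu i) lam - xhat (f i) (phi i) (xl i) (xu i) mu\<bar>
      \<le> ci i * \<bar>xhat (f i) (phi i) (xl i) (xu i) lam - xhat (f i) (phi i) (xl i) (xu i) mu\<bar>"
      by (intro mult_right_mono) auto
    thus ?thesis using ci(2)[OF that, of lam mu] by linarith
  qed
  ultimately show ?thesis by (rule that)
qed

lemma eventually_xhat_close:
  assumes "0 < eps"
  obtains kbar T where "0 < kbar" "\<And>k lam0 lam i t. kbar < k \<Longrightarrow> dyn.solves k lam \<Longrightarrow>
    (\<forall>i<N. lam 0 i = lam0 i) \<Longrightarrow> i < N \<Longrightarrow> T lam0 \<le> t \<Longrightarrow>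
    \<bar>xhat (f i) (phi i) (xl i) (xu i) (lam t i) - xhat (f i) (phi i) (xl i) (xu i) lamstar\<bar> \<le> eps"
proof -
  obtain c where "0 < c" and c: "\<And>i lam mu. i < N \<Longrightarrow>
    c * \<bar>xhat (f i) (phi i) (xl i) (xu i) lam - xhat (f i) (phi i) (xl i) (xu i) mu\<bar> \<le> \<bar>mm i lam - mm i mu\<bar>"
    using uniform_mismatch_expanding by blast
  have "0 < c * eps" using \<open>0 < c\<close> assms by simp
  moreover have "dyn.aggregate lamstar = 0" using sum_mismatch_lamstar by (simp add: dyn.aggregate_def)
  ultimately show ?thesis
  proof (rule dyn.eventually_abs_aggregate_le)
    fix kbar T assume "0 < kbar" and conv: "\<And>k lam0 lam i t. kbar < k \<Longrightarrow> dyn.solves k lam \<Longrightarrow>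
      (\<forall>i<N. lam 0 i = lam0 i) \<Longrightarrow> i < N \<Longrightarrow> T lam0 \<le> t \<Longrightarrow> \<bar>dyn.aggregate (lam t i)\<bar> \<le> c * eps"
    show ?thesis
    proof (rule that[OF \<open>0 < kbar\<close>])
      fix k lam0 lam i t
      assume "kbar < k" "dyn.solves k lam" "\<forall>i<N. lam 0 i = lam0 i" "i < N" "T lam0 \<le> t"
      hence "\<bar>dyn.aggregate (lam t i)\<bar> \<le> c * eps" by (rule conv)
      moreover have "\<bar>mm i (lam t i) - mm i lamstar\<bar> \<le> \<bar>dyn.aggregate (lam t i)\<bar>"
        using dyn.abs_diff_le_aggregate[OF \<open>i < N\<close>, of "lam t i" lamstar] \<open>dyn.aggregate lamstar = 0\<close>
        by simp
      ultimately have "c * \<bar>xhat (f i) (phi i) (xl i) (xu i) (lam t i) - xhat (f i) (phi i) (xl i) (xu i) lamstar\<bar>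
          \<le> c * eps"
        using c[OF \<open>i < N\<close>, of "lam t i" lamstar] by linarith
      thus "\<bar>xhat (f i) (phi i) (xl i) (xu i) (lam t i) - xhat (f i) (phi i) (xl i) (xu i) lamstar\<bar> \<le> eps"
        using \<open>0 < c\<close> by (simp add: mult_le_cancel_left_pos)
    qed
  qed
qed

end

theorem theorem3:
  fixes N :: nat
    and d xl xu :: "nat \<Rightarrow> real"
    and f phi :: "nat \<Rightarrow> real \<Rightarrow> real"
    and E :: "(nat \<times> nat) set"
    and lamstar :: real
  assumes intervals: "\<forall>i<N. xl i \<le> xu i"
    and A1_C1: "\<forall>i<N. f i C1_differentiable_on UNIV \<and> phi i C1_differentiable_on UNIV"
    and A1_fconv: "\<forall>i<N. strictly_convex_on {xl i..xu i} (f i)"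
    and A1_phiconv: "\<forall>i<N. convex_on {xl i..xu i} (phi i)"
    and A1_phider: "\<forall>i<N. \<forall>x\<in>{xl i..xu i}. deriv (phi i) x < 1"
    and A2: "\<forall>i<N. \<forall>x\<in>{xl i..xu i}. deriv (f i) x > 0"
    and A3_nodes: "E \<subseteq> {..<N} \<times> {..<N}"
    and A3_undirected: "sym E"
    and A3_connected: "\<forall>i<N. \<forall>j<N. (i, j) \<in> E\<^sup>*"
    and feasible: "(\<Sum>i<N. xl i - phi i (xl i)) \<le> (\<Sum>i<N. d i)"
                  "(\<Sum>i<N. d i) \<le> (\<Sum>i<N. xu i - phi i (xu i))"
    and maximizer: "\<forall>lam. gm N f phi d xl xu lam \<le> gm N f phi d xl xu lamstar"
  shows "\<forall>\<epsilon>>0. \<exists>kbar>0. \<exists>T :: (nat \<Rightarrow> real) \<Rightarrow> real \<Rightarrow> real.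
           \<forall>k>kbar. \<forall>lam0 :: nat \<Rightarrow> real. \<forall>lam :: real \<Rightarrow> nat \<Rightarrow> real.
             ((\<forall>i<N. lam 0 i = lam0 i) \<and>
              (\<forall>i<N. \<forall>t\<ge>0. ((\<lambda>s. lam s i) has_real_derivative
                  (d i - xhat (f i) (phi i) (xl i) (xu i) (lam t i)
                       + phi i (xhat (f i) (phi i) (xl i) (xu i) (lam t i))
                       + k * (\<Sum>j\<in>{j. (j, i) \<in> E}. lam t j - lam t i))) (at t within {0..})))
             \<longrightarrow> (\<forall>i<N. \<forall>t\<ge>T lam0 k.
                    \<bar>xhat (f i) (phi i) (xl i) (xu i) (lam t i)
                      - xhat (f i) (phi i) (xl i) (xu i) lamstar\<bar> \<le> \<epsilon>)"
proof (intro allI impI, goal_cases)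
  case (1 eps)
  interpret dispatch_problem N d xl xu f phi E lamstar
    using intervals A1_C1 A1_fconv A1_phiconv A1_phider A2 A3_nodes A3_undirected A3_connected maximizer
    by unfold_locales (auto simp: agent_def)
  obtain kbar T where "0 < kbar" and close: "\<And>k lam0 lam i t. kbar < k \<Longrightarrow> dyn.solves k lam \<Longrightarrow>
    (\<forall>i<N. lam 0 i = lam0 i) \<Longrightarrow> i < N \<Longrightarrow> T lam0 \<le> t \<Longrightarrow>
    \<bar>xhat (f i) (phi i) (xl i) (xu i) (lam t i) - xhat (f i) (phi i) (xl i) (xu i) lamstar\<bar> \<le> eps"
    using eventually_xhat_close[OF \<open>0 < eps\<close>] by blast
  show ?case
  proof (intro exI[of _ kbar] exI[of _ "\<lambda>lam0 k. T lam0"] conjI allI impI \<open>0 < kbar\<close>, goal_cases)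
    case (1 k lam0 lam i t)
    hence "dyn.solves k lam" unfolding dyn.solves_def dyn.drift_def laplacian_def mismatch_def by simp
    with 1 show ?case by (intro close) simp_all
  qed
qed

end
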